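(* Let $\delta\in(0,1)$ and suppose $\mathbb{L}=\{\mathcal{L}:\mathbb{E}_0[\mathcal{L}]=1\text{ and }\underline L\le\mathcal{L}\le\overline L\}$ for two non-negative scalars $\underline L$ and $\overline L$, and let $$\mathcal{L}^*=\arg\max_{\mathcal{L}\in\mathbb{L}}\mathbb{E}_0\Big[\frac{(1-\mathcal{L})^2}{\delta+(1-\delta)\mathcal{L}}\Big].$$ Then $\mathcal{L}^*$ is a random variable with a two-point distribution with mass at $\underline L$ and $\overline L$.
   Context: $\mathbb{P}_0$ is a probability measure (the law of outcomes under the hypothesis $\Theta=\theta_0$) with expectation $\mathbb{E}_0$; $\mathbb{L}$ is a set of non-negative random variables (likelihood ratios of possible experiments) on this space.
   Formalization: The probability measure $\mathbb{P}_0$ is atomless: every event of positive probability contains an event of strictly smaller positive probability. The paper assumes this as well. *)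

theory Defs
  imports "HOL-Probability.Probability"
begin

definition atomless :: "'a measure \<Rightarrow> bool" where
  "atomless M \<longleftrightarrow> (\<forall>A\<in>sets M. 0 < measure M A \<longrightarrow>
      (\<exists>B\<in>sets M. B \<subseteq> A \<and> 0 < measure M B \<and> measure M B < measure M A))"

definition LR_set :: "'a measure \<Rightarrow> real \<Rightarrow> real \<Rightarrow> ('a \<Rightarrow> real) set" where
  "LR_set M Llo Lhi = {L. L \<in> borel_measurable M \<and> (\<integral>x. L x \<partial>M) = 1 \<and>
      (\<forall>x\<in>space M. Llo \<le> L x \<and> L x \<le> Lhi)}"

definition LR_objective :: "'a measure \<Rightarrow> real \<Rightarrow> ('a \<Rightarrow> real) \<Rightarrow> real" where
  "LR_objective M \<delta> L = (\<integral>x. (1 - L x)\<^sup>2 / (\<delta> + (1 - \<delta>) * L x) \<partial>M)"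

end

theory Submission
  imports Defs
begin

text \<open>With \<open>u = \<delta> + (1 - \<delta>) L\<close> the integrand equals \<open>(u + 1/u - 2) / (1 - \<delta>)\<^sup>2\<close>, so it is
  a strictly convex function of \<open>L \<ge> 0\<close>. If a maximiser \<open>L\<^sup>*\<close> stayed away from both bounds on a
  set of positive probability, it would stay at least \<open>\<epsilon>\<close> away from them on some set \<open>T\<close> of
  positive probability. Atomlessness splits \<open>T\<close> into two sets of positive probability, and a
  suitable combination of their indicators gives a mean-zero perturbation \<open>h\<close> with
  \<open>\<bar>h\<bar> \<le> \<epsilon>\<close>, supported in \<open>T\<close> and not a.e. zero. Both \<open>L\<^sup>* + h\<close> and \<open>L\<^sup>* - h\<close> are
  admissible, and strict convexity makes the sum of their objectives exceed twice the objective
  of \<open>L\<^sup>*\<close>, so one of them beats \<open>L\<^sup>*\<close>.\<close>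

definition LR_kernel :: "real \<Rightarrow> real \<Rightarrow> real" where
  "LR_kernel \<delta> l = (1 - l)\<^sup>2 / (\<delta> + (1 - \<delta>) * l)"

lemma LR_objective_eq_integral_LR_kernel:
  "LR_objective M \<delta> L = (\<integral>x. LR_kernel \<delta> (L x) \<partial>M)"
  by (simp add: LR_objective_def LR_kernel_def)

lemma inverse_midpoint_strict_convex:
  fixes u k :: real
  assumes "0 < u - k" "0 < u + k" "k \<noteq> 0"
  shows "2 / u < 1 / (u + k) + 1 / (u - k)"
proof -
  have "0 < u"
    using assms by simp
  moreover have "0 < u * u - k * k"
    using mult_pos_pos[OF assms(1,2)] by (simp add: algebra_simps)
  moreover have "0 < k * k"
    using assms(3) by (auto simp: zero_less_mult_iff linorder_neq_iff)
  ultimately have "2 / u < 2 * u / (u * u - k * k)"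
    by (simp add: field_simps)
  also have "\<dots> = 1 / (u + k) + 1 / (u - k)"
    using assms by (simp add: field_simps)
  finally show ?thesis .
qed

lemma LR_kernel_eq_inverse_form:
  fixes \<delta> l :: real
  assumes "\<delta> \<noteq> 1" "\<delta> + (1 - \<delta>) * l \<noteq> 0"
  shows "LR_kernel \<delta> l = ((\<delta> + (1 - \<delta>) * l) + 1 / (\<delta> + (1 - \<delta>) * l) - 2) / (1 - \<delta>)\<^sup>2"
proof -
  define u where "u = \<delta> + (1 - \<delta>) * l"
  have "(1 - l) * (1 - \<delta>) = 1 - u"
    by (simp add: u_def algebra_simps)
  then have "(1 - l)\<^sup>2 = (1 - u)\<^sup>2 / (1 - \<delta>)\<^sup>2"
    using assms(1) by (metis power_mult_distrib nonzero_eq_divide_eq power_not_zero right_minus_eq)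
  then have "LR_kernel \<delta> l = (1 - u)\<^sup>2 / u / (1 - \<delta>)\<^sup>2"
    by (simp add: LR_kernel_def u_def[symmetric])
  also have "(1 - u)\<^sup>2 / u = u + 1 / u - 2"
    using assms(2) unfolding u_def[symmetric] by (simp add: field_simps power2_eq_square)
  finally show ?thesis
    by (simp add: u_def)
qed

lemma LR_kernel_midpoint_strict_convex:
  fixes \<delta> l h :: real
  assumes "0 < \<delta>" "\<delta> < 1" "0 \<le> l - h" "0 \<le> l + h" "h \<noteq> 0"
  shows "2 * LR_kernel \<delta> l < LR_kernel \<delta> (l + h) + LR_kernel \<delta> (l - h)"
proof -
  define u where "u = \<delta> + (1 - \<delta>) * l"
  define k where "k = (1 - \<delta>) * h"
  have plus: "\<delta> + (1 - \<delta>) * (l + h) = u + k" and minus: "\<delta> + (1 - \<delta>) * (l - h) = u - k"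
    by (simp_all add: u_def k_def algebra_simps)
  have "0 < u + k" "0 < u - k"
    unfolding plus[symmetric] minus[symmetric] using assms
    by (intro add_pos_nonneg mult_nonneg_nonneg; simp)+
  moreover have "0 < u" "k \<noteq> 0"
    using calculation assms by (auto simp: k_def)
  ultimately have "2 * (u + 1 / u - 2) < (u + k + 1 / (u + k) - 2) + (u - k + 1 / (u - k) - 2)"
    using inverse_midpoint_strict_convex by simp
  moreover have "0 < (1 - \<delta>)\<^sup>2"
    using assms by simp
  ultimately show ?thesis
    using assms \<open>0 < u\<close> \<open>0 < u + k\<close> \<open>0 < u - k\<close>
    by (simp add: LR_kernel_eq_inverse_form plus minus u_def[symmetric] add_divide_distrib[symmetric]
        divide_strict_right_mono)
qed

lemma LR_kernel_bounds:
  fixes \<delta> l H :: real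
  assumes "0 < \<delta>" "\<delta> \<le> 1" "0 \<le> l" "l \<le> H"
  shows "0 \<le> LR_kernel \<delta> l" "LR_kernel \<delta> l \<le> (1 + H)\<^sup>2 / \<delta>"
proof -
  have den: "\<delta> \<le> \<delta> + (1 - \<delta>) * l"
    using assms by simp
  have den_pos: "0 < \<delta> + (1 - \<delta>) * l"
    using den assms(1) by linarith
  then show "0 \<le> LR_kernel \<delta> l"
    by (simp add: LR_kernel_def)
  have "(1 - l)\<^sup>2 \<le> (1 + H)\<^sup>2"
    using assms by (simp add: abs_le_square_iff[symmetric])
  then have "LR_kernel \<delta> l \<le> (1 + H)\<^sup>2 / (\<delta> + (1 - \<delta>) * l)"
    unfolding LR_kernel_def using den_pos by (intro divide_right_mono) auto
  also have "\<dots> \<le> (1 + H)\<^sup>2 / \<delta>"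
    using assms den den_pos by (intro divide_left_mono mult_pos_pos) auto
  finally show "LR_kernel \<delta> l \<le> (1 + H)\<^sup>2 / \<delta>" .
qed

text \<open>A non-integrable function has Bochner integral \<open>0\<close>, so \<open>E\<^sub>0[L] = 1\<close> already forces
  integrability.\<close>

lemma LR_set_integrable: "L \<in> LR_set M lo hi \<Longrightarrow> integrable M L"
  unfolding LR_set_def using not_integrable_integral_eq by fastforce

lemma LR_set_add_perturbation:
  assumes "L \<in> LR_set M lo hi" "integrable M h" "(\<integral>x. h x \<partial>M) = 0"
    and "\<forall>x. \<bar>h x\<bar> \<le> \<epsilon>"
    and "\<forall>x. x \<notin> {x\<in>space M. lo + \<epsilon> \<le> L x \<and> L x \<le> hi - \<epsilon>} \<longrightarrow> h x = 0"
  shows "(\<lambda>x. L x + h x) \<in> LR_set M lo hi"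
proof -
  have "lo \<le> L x + h x \<and> L x + h x \<le> hi" if "x \<in> space M" for x
  proof (cases "lo + \<epsilon> \<le> L x \<and> L x \<le> hi - \<epsilon>")
    case True
    then show ?thesis
      using assms(4) abs_le_iff[of "h x" \<epsilon>] by auto
  next
    case False
    then show ?thesis
      using assms(1,5) that unfolding LR_set_def by auto
  qed
  then show ?thesis
    using assms(1-3) LR_set_integrable[OF assms(1)] unfolding LR_set_def by auto
qed

lemma (in prob_space) integrable_LR_kernel:
  assumes "0 < \<delta>" "\<delta> \<le> 1" "0 \<le> lo" "L \<in> LR_set M lo hi"
  shows "integrable M (\<lambda>x. LR_kernel \<delta> (L x))"
proof (rule integrable_const_bound[where B = "(1 + hi)\<^sup>2 / \<delta>"])
  from assms(4) have [measurable]: "L \<in> borel_measurable M"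
    and bounds: "\<forall>x\<in>space M. lo \<le> L x \<and> L x \<le> hi"
    unfolding LR_set_def by auto
  show "AE x in M. norm (LR_kernel \<delta> (L x)) \<le> (1 + hi)\<^sup>2 / \<delta>"
    using bounds assms(1-3) LR_kernel_bounds[of \<delta> _ hi] by (intro AE_I2) force
  show "(\<lambda>x. LR_kernel \<delta> (L x)) \<in> borel_measurable M"
    unfolding LR_kernel_def by measurable
qed

lemma (in prob_space) LR_objective_midpoint_strict_convex:
  assumes "0 < \<delta>" "\<delta> < 1" "0 \<le> lo" "L \<in> LR_set M lo hi"
    and plus: "(\<lambda>x. L x + h x) \<in> LR_set M lo hi"
    and minus: "(\<lambda>x. L x - h x) \<in> LR_set M lo hi"
    and "\<not> (AE x in M. h x = 0)"
  shows "2 * LR_objective M \<delta> L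
    < LR_objective M \<delta> (\<lambda>x. L x + h x) + LR_objective M \<delta> (\<lambda>x. L x - h x)"
proof -
  let ?f = "LR_kernel \<delta>"
  have [measurable]: "L \<in> borel_measurable M" "(\<lambda>x. L x + h x) \<in> borel_measurable M"
    using assms(4) plus unfolding LR_set_def by auto
  then have [measurable]: "h \<in> borel_measurable M"
    using borel_measurable_diff[of "\<lambda>x. L x + h x" M L] by simp
  have nonneg: "0 \<le> L x - h x" "0 \<le> L x + h x" if "x \<in> space M" for x
    using that assms(3) plus minus unfolding LR_set_def by force+
  have strict: "2 * ?f (L x) < ?f (L x + h x) + ?f (L x - h x)" if "x \<in> space M" "h x \<noteq> 0" for x
    using LR_kernel_midpoint_strict_convex[OF assms(1,2) nonneg[OF that(1)] that(2)] .
  have "2 * ?f (L x) \<le> ?f (L x + h x) + ?f (L x - h x)" if "x \<in> space M" for x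
    using strict[OF that] by (cases "h x = 0") (auto simp: less_imp_le)
  then have weak: "AE x in M. 2 * ?f (L x) \<le> ?f (L x + h x) + ?f (L x - h x)"
    by (rule AE_I2)
  have "emeasure M {x\<in>space M. h x \<noteq> 0} \<noteq> 0"
    using assms(7) AE_iff_measurable[of _ M "\<lambda>x. h x = 0"] by auto
  moreover have "AE x in M. x \<in> {x\<in>space M. h x \<noteq> 0} \<longrightarrow>
      2 * ?f (L x) \<noteq> ?f (L x + h x) + ?f (L x - h x)"
    using strict by (intro AE_I2) force
  ultimately have "(\<integral>x. 2 * ?f (L x) \<partial>M) < (\<integral>x. ?f (L x + h x) + ?f (L x - h x) \<partial>M)"
    using weak assms(1,2,3)
    by (intro integral_less_AE[where A = "{x\<in>space M. h x \<noteq> 0}"])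
      (auto intro!: integrable_LR_kernel[OF _ _ _ assms(4)] integrable_LR_kernel[OF _ _ _ plus]
        integrable_LR_kernel[OF _ _ _ minus])
  then show ?thesis
    using assms(1-3) integrable_LR_kernel[OF _ _ _ plus] integrable_LR_kernel[OF _ _ _ minus]
    by (simp add: LR_objective_eq_integral_LR_kernel)
qed

lemma (in prob_space) interior_band_pos_prob:
  fixes L :: "'a \<Rightarrow> real"
  assumes [measurable]: "L \<in> borel_measurable M"
    and bounds: "\<forall>x\<in>space M. lo \<le> L x \<and> L x \<le> hi"
    and "\<not> (AE x in M. L x = lo \<or> L x = hi)"
  obtains \<epsilon> where "0 < \<epsilon>" "0 < prob {x\<in>space M. lo + \<epsilon> \<le> L x \<and> L x \<le> hi - \<epsilon>}"
proof -
  define band where "band n = {x\<in>space M. lo + 1 / Suc n \<le> L x \<and> L x \<le> hi - 1 / Suc n}" for n :: nat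
  have "\<exists>n. 0 < prob (band n)"
  proof (rule ccontr)
    assume "\<nexists>n. 0 < prob (band n)"
    then have "band n \<in> null_sets M" for n
      by (intro null_setsI) (auto simp: emeasure_eq_measure measure_le_0_iff band_def not_less)
    then have "AE x in M. \<forall>n. x \<notin> band n"
      by (simp add: AE_all_countable AE_not_in)
    then have "AE x in M. L x = lo \<or> L x = hi"
      using AE_space
    proof eventually_elim
      case (elim x)
      show ?case
      proof (rule ccontr)
        assume "\<not> (L x = lo \<or> L x = hi)"
        then have "0 < min (L x - lo) (hi - L x)"
          using bounds elim(2) by force
        then obtain n where "inverse (real (Suc n)) < min (L x - lo) (hi - L x)"
          using reals_Archimedean by blast
        then have "x \<in> band n"
          using elim(2) by (simp add: band_def inverse_eq_divide)
        then show False
          using elim(1) by blast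
      qed
    qed
    then show False
      using assms(3) by blast
  qed
  then obtain n where "0 < prob (band n)"
    by blast
  then show thesis
    using that[of "1 / Suc n"] by (simp add: band_def)
qed

lemma (in prob_space) atomless_mean_zero_perturbation:
  assumes "atomless M" "T \<in> events" "0 < prob T" "0 < \<epsilon>"
  obtains h :: "'a \<Rightarrow> real"
  where "integrable M h" "(\<integral>x. h x \<partial>M) = 0" "\<not> (AE x in M. h x = 0)"
    and "\<forall>x. \<bar>h x\<bar> \<le> \<epsilon>" "\<forall>x. x \<notin> T \<longrightarrow> h x = 0"
proof -
  obtain B where B: "B \<in> events" "B \<subseteq> T" "0 < prob B" "prob B < prob T"
    using assms(1-3) unfolding atomless_def by blast
  define A where "A = T - B"
  have A: "A \<in> events" "0 < prob A"
    using assms(2) B finite_measure_Diff[of T B] by (auto simp: A_def)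
  \<comment> \<open>\<open>A\<close> and \<open>B\<close> are disjoint, and the weights \<open>prob B\<close>, \<open>prob A\<close> balance the mean.\<close>
  define h where "h = (\<lambda>x. \<epsilon> * (prob B * indicator A x - prob A * indicator B x))"
  have "integrable M h"
    unfolding h_def using A(1) B(1)
    by (intro integrable_mult_right Bochner_Integration.integrable_diff integrable_real_indicator)
      (auto simp: emeasure_eq_measure)
  moreover have "(\<integral>x. h x \<partial>M) = 0"
    using A(1) B(1) sets.sets_into_space
    by (simp add: h_def emeasure_eq_measure Int_absorb2)
  moreover have "\<not> (AE x in M. h x = 0)"
  proof
    assume "AE x in M. h x = 0"
    moreover have "h x \<noteq> 0" if "x \<in> A" for x
      using that A B assms(4) by (auto simp: h_def A_def)
    ultimately have "AE x in M. x \<notin> A"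
      by (auto elim: AE_mp)
    then show False
      using A AE_iff_measurable[of A M "\<lambda>x. x \<notin> A"] sets.sets_into_space
      by (auto simp: emeasure_eq_measure)
  qed
  moreover have "\<forall>x. \<bar>h x\<bar> \<le> \<epsilon>"
    using assms(4) by (auto simp: h_def A_def indicator_def abs_mult)
  moreover have "\<forall>x. x \<notin> T \<longrightarrow> h x = 0"
    using B(2) by (auto simp: h_def A_def indicator_def)
  ultimately show thesis
    using that by blast
qed

theorem proposition9:
  fixes M :: "'a measure" and \<delta> Llo Lhi :: real and Lstar :: "'a \<Rightarrow> real"
  assumes "prob_space M"
    and "atomless M"
    and "0 < \<delta>" and "\<delta> < 1"
    and "0 \<le> Llo" and "0 \<le> Lhi"
    and "Lstar \<in> LR_set M Llo Lhi"
    and "\<forall>L\<in>LR_set M Llo Lhi. LR_objective M \<delta> L \<le> LR_objective M \<delta> Lstar"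
  shows "AE x in M. Lstar x = Llo \<or> Lstar x = Lhi"
proof (rule ccontr)
  interpret prob_space M by fact
  have Lstar_measurable: "Lstar \<in> borel_measurable M"
    and bounds: "\<forall>x\<in>space M. Llo \<le> Lstar x \<and> Lstar x \<le> Lhi"
    using assms(7) unfolding LR_set_def by auto
  assume "\<not> (AE x in M. Lstar x = Llo \<or> Lstar x = Lhi)"
  then obtain \<epsilon> where \<epsilon>: "0 < \<epsilon>"
    and band: "0 < prob {x\<in>space M. Llo + \<epsilon> \<le> Lstar x \<and> Lstar x \<le> Lhi - \<epsilon>}"
      (is "0 < prob ?T")
    by (rule interior_band_pos_prob[OF Lstar_measurable bounds])
  have T: "?T \<in> events"
    using Lstar_measurable by measurable
  obtain h where h: "integrable M h" "(\<integral>x. h x \<partial>M) = 0" "\<not> (AE x in M. h x = 0)"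
    and small: "\<forall>x. \<bar>h x\<bar> \<le> \<epsilon>" and supp: "\<forall>x. x \<notin> ?T \<longrightarrow> h x = 0"
    by (rule atomless_mean_zero_perturbation[OF assms(2) T band \<epsilon>])
  have plus: "(\<lambda>x. Lstar x + h x) \<in> LR_set M Llo Lhi"
    by (rule LR_set_add_perturbation[OF assms(7) h(1,2) small supp])
  have minus: "(\<lambda>x. Lstar x - h x) \<in> LR_set M Llo Lhi"
    using LR_set_add_perturbation[OF assms(7), of "\<lambda>x. - h x" \<epsilon>] h(1,2) small supp by simp
  have "2 * LR_objective M \<delta> Lstar
      < LR_objective M \<delta> (\<lambda>x. Lstar x + h x) + LR_objective M \<delta> (\<lambda>x. Lstar x - h x)"
    by (rule LR_objective_midpoint_strict_convex[OF assms(3,4,5,7) plus minus h(3)])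
  moreover have "LR_objective M \<delta> (\<lambda>x. Lstar x + h x) \<le> LR_objective M \<delta> Lstar"
    and "LR_objective M \<delta> (\<lambda>x. Lstar x - h x) \<le> LR_objective M \<delta> Lstar"
    using assms(8) plus minus by blast+
  ultimately show False
    by linarith
qed

end
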